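(* Let $q\in\mathbb{C}^{\ast}$ with $|q|=1$, $q$ not a root of unity, and suppose there exist $C,L>0$ such that $|q^n-1|\ge C|n|^{-L}$ for all integers $n\neq0$. Let $A={\cal O}(\mathbb{C}^{\ast})$ be the algebra of holomorphic functions on $\mathbb{C}^{\ast}$, regarded as a $\mathbb{Z}$-module where the generator $1\in\mathbb{Z}$ sends $f(z)$ to $f(qz)$. Then the group cohomology $H^1(\mathbb{Z},A)$ is isomorphic to $\mathbb{C}$. *)

theory Defs
  imports "HOL-Complex_Analysis.Complex_Analysis"
begin

text \<open>The algebra A = O(C^*): functions holomorphic on C - {0}; the (irrelevant) value
  at 0 is normalised to 0 so that each element of A has a unique representative.\<close>
definition holCstar :: "(complex \<Rightarrow> complex) set" where
  "holCstar = {f. f holomorphic_on (- {0}) \<and> f 0 = 0}"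

definition qact :: "complex \<Rightarrow> int \<Rightarrow> (complex \<Rightarrow> complex) \<Rightarrow> (complex \<Rightarrow> complex)" where
  "qact q n f = (\<lambda>z. f (q powi n * z))"

definition Z1 :: "complex \<Rightarrow> (int \<Rightarrow> complex \<Rightarrow> complex) set" where
  "Z1 q = {c. (\<forall>n. c n \<in> holCstar) \<and>
              (\<forall>m n. c (m + n) = (\<lambda>z. c m z + qact q m (c n) z))}"

definition B1 :: "complex \<Rightarrow> (int \<Rightarrow> complex \<Rightarrow> complex) set" where
  "B1 q = {c. \<exists>a \<in> holCstar. \<forall>n. c n = (\<lambda>z. qact q n a z - a z)}"

text \<open>H^1(Z,A) = Z1/B1 is isomorphic to C (as complex vector spaces): there is a
  C-linear map on Z1, onto C, whose kernel is exactly B1 (first isomorphism theorem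
  written out, avoiding a quotient type).\<close>
definition H1_iso_C :: "complex \<Rightarrow> bool" where
  "H1_iso_C q \<longleftrightarrow> (\<exists>\<phi> :: (int \<Rightarrow> complex \<Rightarrow> complex) \<Rightarrow> complex.
     (\<forall>c\<in>Z1 q. \<forall>d\<in>Z1 q. \<phi> (\<lambda>n z. c n z + d n z) = \<phi> c + \<phi> d) \<and>
     (\<forall>c\<in>Z1 q. \<forall>k. \<phi> (\<lambda>n z. k * c n z) = k * \<phi> c) \<and>
     \<phi> ` Z1 q = UNIV \<and>
     {c \<in> Z1 q. \<phi> c = 0} = B1 q)"

end

(*
  A cocycle c is determined by f = c 1, and it is a coboundary iff the q-difference equation
  a (q * z) - a z = f z has a solution a holomorphic on C - {0}. Comparing Laurent
  coefficients gives (q^n - 1) a_n = f_n. For n = 0 this forces f_0 = 0, the residue of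
  f(z)/z at 0; this is the obstruction, and c |-> f_0 is a linear surjection onto C. Conversely,
  if f_0 = 0 put a_n = f_n / (q^n - 1): by the Cauchy estimates f_n decays faster than any
  geometric sequence, and the Diophantine bound costs only a polynomial factor |n|^L, so the
  Laurent series of a converges on all of C - {0}.
*)
theory Submission
  imports Defs "HOL-Real_Asymp.Real_Asymp"
begin

section \<open>Laurent coefficients\<close>

definition laurent_coeff :: "(complex \<Rightarrow> complex) \<Rightarrow> int \<Rightarrow> complex" where
  "laurent_coeff f n = residue (\<lambda>w. f w * w powi (- n - 1)) 0"

lemma has_contour_integral_laurent_coeff:
  assumes "f holomorphic_on - {0}" "r > 0"
  shows "((\<lambda>w. f w * w powi (- n - 1)) has_contour_integral 2 * pi * \<i> * laurent_coeff f n)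
           (circlepath 0 r)"
  unfolding laurent_coeff_def
  by (rule base_residue[of UNIV])
     (use assms in \<open>auto simp: Compl_eq_Diff_UNIV[symmetric] intro!: holomorphic_intros\<close>)

lemma laurent_coeff_cong:
  assumes "\<And>z. z \<noteq> 0 \<Longrightarrow> f z = g z"
  shows "laurent_coeff f n = laurent_coeff g n"
  unfolding laurent_coeff_def
  by (rule residue_cong) (use assms in \<open>auto simp: eventually_at_filter\<close>)

lemma laurent_coeff_add:
  assumes "f holomorphic_on - {0}" "g holomorphic_on - {0}"
  shows "laurent_coeff (\<lambda>z. f z + g z) n = laurent_coeff f n + laurent_coeff g n"
  unfolding laurent_coeff_def distrib_right
  by (rule residue_add[of UNIV])
     (use assms in \<open>auto simp: Compl_eq_Diff_UNIV[symmetric] intro!: holomorphic_intros\<close>)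

lemma laurent_coeff_diff:
  assumes "f holomorphic_on - {0}" "g holomorphic_on - {0}"
  shows "laurent_coeff (\<lambda>z. f z - g z) n = laurent_coeff f n - laurent_coeff g n"
  unfolding laurent_coeff_def left_diff_distrib
  by (rule residue_diff[of UNIV])
     (use assms in \<open>auto simp: Compl_eq_Diff_UNIV[symmetric] intro!: holomorphic_intros\<close>)

lemma laurent_coeff_cmult:
  assumes "f holomorphic_on - {0}"
  shows "laurent_coeff (\<lambda>z. c * f z) n = c * laurent_coeff f n"
  unfolding laurent_coeff_def mult.assoc
  by (rule residue_lmul[of UNIV])
     (use assms in \<open>auto simp: Compl_eq_Diff_UNIV[symmetric] intro!: holomorphic_intros\<close>)

lemma laurent_coeff_const: "laurent_coeff (\<lambda>_. c) 0 = c"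
proof -
  have "laurent_coeff (\<lambda>_. c) 0 = residue (\<lambda>w. c / (w - 0)) 0"
    unfolding laurent_coeff_def
    by (rule residue_cong) (auto simp: power_int_minus divide_inverse)
  also have "\<dots> = c"
    by (rule residue_simple[of UNIV]) auto
  finally show ?thesis .
qed

lemma laurent_coeff_bound:
  assumes hol: "f holomorphic_on - {0}" and "r > 0"
    and bound: "\<And>w. norm w = r \<Longrightarrow> norm (f w) \<le> M"
  shows "norm (laurent_coeff f n) \<le> M * r powi (- n)"
proof -
  have "M \<ge> 0"
    using order_trans[OF norm_ge_zero bound[of "of_real r"]] \<open>r > 0\<close> by simp
  have "norm (2 * pi * \<i> * laurent_coeff f n) \<le> M * r powi (- n - 1) * (2 * pi * r)"
  proof (rule has_contour_integral_bound_circlepath)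
    show "((\<lambda>w. f w * w powi (- n - 1)) has_contour_integral 2 * pi * \<i> * laurent_coeff f n)
            (circlepath 0 r)"
      by (rule has_contour_integral_laurent_coeff[OF hol \<open>r > 0\<close>])
  next
    fix w :: complex assume "norm (w - 0) = r"
    then show "norm (f w * w powi (- n - 1)) \<le> M * r powi (- n - 1)"
      using bound \<open>r > 0\<close> by (auto simp: norm_mult norm_power_int intro!: mult_right_mono)
  qed (use \<open>r > 0\<close> \<open>M \<ge> 0\<close> in auto)
  also have "\<dots> = 2 * pi * (M * r powi (- n))"
    using \<open>r > 0\<close> by (simp add: power_int_diff field_simps)
  finally show ?thesis
    by (simp add: norm_mult)
qed

lemma holomorphic_on_compose_scale:
  assumes "f holomorphic_on - {0}" and "q \<noteq> 0"
  shows "(\<lambda>z. f (q * z)) holomorphic_on - {0}"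
  using assms
  by (intro holomorphic_on_compose_gen[OF _ assms(1), unfolded o_def]) (auto intro!: holomorphic_intros)

lemma winding_number_scaled_circlepath:
  assumes "q \<noteq> 0"
  shows "winding_number ((\<lambda>w. q * w) \<circ> circlepath 0 1) 0 = 1"
proof -
  define \<gamma> where "\<gamma> = circlepath (0::complex) 1"
  have "valid_path ((\<lambda>w. q * w) \<circ> \<gamma>)" "0 \<notin> path_image ((\<lambda>w. q * w) \<circ> \<gamma>)"
    using \<open>q \<noteq> 0\<close> unfolding \<gamma>_def
    by (auto simp: path_image_compose
             intro!: valid_path_compose_holomorphic[where S = UNIV] holomorphic_intros)
  then have "winding_number ((\<lambda>w. q * w) \<circ> \<gamma>) 0
               = contour_integral ((\<lambda>w. q * w) \<circ> \<gamma>) (\<lambda>w. 1 / (w - 0)) / (2 * pi * \<i>)"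
    by (simp add: winding_number_valid_path)
  also have "contour_integral ((\<lambda>w. q * w) \<circ> \<gamma>) (\<lambda>w. 1 / (w - 0))
               = contour_integral \<gamma> (\<lambda>w. q * (1 / (q * w - 0)))"
    by (subst contour_integral_comp_analyticW[where s = UNIV]) (auto simp: \<gamma>_def)
  also have "\<dots> = contour_integral \<gamma> (\<lambda>w. 1 / (w - 0))"
    using \<open>q \<noteq> 0\<close> by (intro contour_integral_eq) simp
  also have "\<dots> = 2 * pi * \<i> * winding_number \<gamma> 0"
    by (simp add: winding_number_valid_path \<gamma>_def)
  finally show ?thesis
    by (simp add: \<gamma>_def winding_number_circlepath comp_def)
qed

lemma laurent_coeff_compose_scale:
  assumes hol: "f holomorphic_on - {0}" and "q \<noteq> 0"
  shows "laurent_coeff (\<lambda>z. f (q * z)) n = q powi n * laurent_coeff f n"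
proof -
  define \<gamma> where "\<gamma> = circlepath (0::complex) 1"
  define \<beta> where "\<beta> = (\<lambda>w. q * w) \<circ> \<gamma>"
  define F where "F = (\<lambda>w. f w * w powi (- n - 1))"
  have \<beta>: "valid_path \<beta>" "pathfinish \<beta> = pathstart \<beta>" "0 \<notin> path_image \<beta>"
    using \<open>q \<noteq> 0\<close> unfolding \<beta>_def \<gamma>_def
    by (auto simp: pathfinish_compose pathstart_compose path_image_compose
             intro!: valid_path_compose_holomorphic[where S = UNIV] holomorphic_intros)
  have hol_F: "F holomorphic_on UNIV - {0}"
    unfolding F_def using hol by (auto simp: Compl_eq_Diff_UNIV[symmetric] intro!: holomorphic_intros)
  have "contour_integral \<beta> F = 2 * pi * \<i> * (\<Sum>p\<in>{0}. winding_number \<beta> p * residue F p)"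
    by (rule Residue_theorem[OF _ _ _ hol_F \<beta>(1,2)]) (use \<beta>(3) in auto)
  then have "2 * pi * \<i> * laurent_coeff f n = contour_integral \<beta> F"
    using winding_number_scaled_circlepath[OF \<open>q \<noteq> 0\<close>]
    by (simp add: F_def laurent_coeff_def \<beta>_def \<gamma>_def)
  also have "\<dots> = contour_integral \<gamma> (\<lambda>w. q * F (q * w))"
    unfolding \<beta>_def by (subst contour_integral_comp_analyticW[where s = UNIV]) (auto simp: \<gamma>_def)
  also have "\<dots> = contour_integral \<gamma> (\<lambda>w. q powi (- n) * (f (q * w) * w powi (- n - 1)))"
    using \<open>q \<noteq> 0\<close>
    by (intro contour_integral_eq) (auto simp: F_def power_int_mult_distrib power_int_diff field_simps)
  also have "\<dots> = q powi (- n) * (2 * pi * \<i> * laurent_coeff (\<lambda>z. f (q * z)) n)"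
    unfolding \<gamma>_def
    by (intro contour_integral_unique has_contour_integral_lmul has_contour_integral_laurent_coeff
              holomorphic_on_compose_scale hol \<open>q \<noteq> 0\<close>) simp
  finally show ?thesis
    using \<open>q \<noteq> 0\<close> by (simp add: power_int_minus field_simps)
qed

section \<open>The Laurent expansion\<close>

lemma sums_contour_integral_geometric:
  fixes g x :: "complex \<Rightarrow> complex"
  assumes "r > 0" and g: "continuous_on (sphere z r) g" and x: "continuous_on (sphere z r) x"
    and x_bound: "\<And>w. w \<in> sphere z r \<Longrightarrow> norm (x w) \<le> \<theta>" and "\<theta> < 1"
  shows "(\<lambda>k. contour_integral (circlepath z r) (\<lambda>w. g w * x w ^ k))
           sums contour_integral (circlepath z r) (\<lambda>w. g w / (1 - x w))"
proof -
  obtain B where B: "\<And>w. w \<in> sphere z r \<Longrightarrow> norm (g w) \<le> B"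
    using compact_imp_bounded[OF compact_continuous_image[OF g compact_sphere]]
    unfolding bounded_iff by blast
  have "z + of_real r \<in> sphere z r"
    using \<open>r > 0\<close> by (simp add: dist_norm)
  then have "\<theta> \<ge> 0"
    using x_bound norm_ge_zero order_trans by blast
  have sphere: "path_image (circlepath z r) = sphere z r"
    using \<open>r > 0\<close> by simp
  have uniform: "uniform_limit (sphere z r)
                   (\<lambda>n w. \<Sum>k<n. g w * x w ^ k) (\<lambda>w. \<Sum>k. g w * x w ^ k) sequentially"
  proof (rule Weierstrass_m_test)
    show "norm (g w * x w ^ k) \<le> B * \<theta> ^ k" if "w \<in> sphere z r" for k w
      unfolding norm_mult norm_power
      using that B[OF that] x_bound[OF that] \<open>\<theta> \<ge> 0\<close>
      by (intro mult_mono power_mono) (auto intro: order_trans[OF norm_ge_zero])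
    show "summable (\<lambda>k. B * \<theta> ^ k)"
      using \<open>\<theta> \<ge> 0\<close> \<open>\<theta> < 1\<close> by (intro summable_mult summable_geometric) simp
  qed
  have integrable:
    "\<forall>\<^sub>F n in sequentially. (\<lambda>w. \<Sum>k<n. g w * x w ^ k) contour_integrable_on circlepath z r"
    using g x sphere
    by (intro always_eventually allI contour_integrable_continuous_circlepath)
       (auto intro!: continuous_intros)
  have "(\<lambda>n. contour_integral (circlepath z r) (\<lambda>w. \<Sum>k<n. g w * x w ^ k))
      \<longlonglongrightarrow> contour_integral (circlepath z r) (\<lambda>w. \<Sum>k. g w * x w ^ k)"
    using contour_integral_uniform_limit_circlepath(2)[OF integrable uniform _ \<open>r > 0\<close>] by simp
  also have "contour_integral (circlepath z r) (\<lambda>w. \<Sum>k. g w * x w ^ k)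
      = contour_integral (circlepath z r) (\<lambda>w. g w / (1 - x w))"
  proof (rule contour_integral_eq)
    fix w assume "w \<in> path_image (circlepath z r)"
    then have "norm (x w) < 1"
      using x_bound \<open>\<theta> < 1\<close> sphere by fastforce
    then show "(\<Sum>k. g w * x w ^ k) = g w / (1 - x w)"
      using sums_unique[OF sums_mult[OF geometric_sums, of "x w" "g w"]] by simp
  qed
  finally show ?thesis
    unfolding sums_def
    using g x sphere
    by (subst (asm) contour_integral_sum)
       (auto intro!: contour_integrable_continuous_circlepath continuous_intros)
qed

lemma sums_laurent_coeff_regular_part:
  assumes hol: "f holomorphic_on - {0}" and "norm z < R"
  shows "(\<lambda>k. laurent_coeff f (int k) * z ^ k)
           sums (contour_integral (circlepath 0 R) (\<lambda>w. f w / (w - z)) / (2 * pi * \<i>))"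
proof -
  have "R > 0"
    using \<open>norm z < R\<close> norm_ge_zero[of z] by linarith
  have cont: "continuous_on (sphere 0 R) f"
    using \<open>R > 0\<close> by (intro holomorphic_on_imp_continuous_on holomorphic_on_subset[OF hol]) auto
  have "(\<lambda>k. contour_integral (circlepath 0 R) (\<lambda>w. f w / w * (z / w) ^ k))
          sums contour_integral (circlepath 0 R) (\<lambda>w. f w / w / (1 - z / w))"
    by (rule sums_contour_integral_geometric[where \<theta> = "norm z / R"])
       (use \<open>R > 0\<close> \<open>norm z < R\<close> cont in
         \<open>auto intro!: continuous_intros simp: norm_divide\<close>)
  moreover have "contour_integral (circlepath 0 R) (\<lambda>w. f w / w * (z / w) ^ k)
                   = 2 * pi * \<i> * (laurent_coeff f (int k) * z ^ k)" for k
  proof (rule contour_integral_unique)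
    have "((\<lambda>w. f w * w powi (- int k - 1) * z ^ k) has_contour_integral
            2 * pi * \<i> * (laurent_coeff f (int k) * z ^ k)) (circlepath 0 R)"
      using has_contour_integral_rmul[OF has_contour_integral_laurent_coeff[OF hol \<open>R > 0\<close>]]
      by (simp only: mult.assoc)
    then show "((\<lambda>w. f w / w * (z / w) ^ k) has_contour_integral
                 2 * pi * \<i> * (laurent_coeff f (int k) * z ^ k)) (circlepath 0 R)"
      by (rule has_contour_integral_eq)
         (use \<open>R > 0\<close> in
           \<open>auto simp: power_int_diff power_int_minus power_divide field_simps\<close>)
  qed
  moreover have "contour_integral (circlepath 0 R) (\<lambda>w. f w / w / (1 - z / w))
                   = contour_integral (circlepath 0 R) (\<lambda>w. f w / (w - z))"
    by (rule contour_integral_eq) (use \<open>R > 0\<close> in \<open>auto simp: field_simps\<close>)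
  ultimately have "(\<lambda>k. 2 * pi * \<i> * (laurent_coeff f (int k) * z ^ k))
                    sums contour_integral (circlepath 0 R) (\<lambda>w. f w / (w - z))"
    by simp
  then show ?thesis
    by (rule sums_mult_D) simp
qed

lemma sums_laurent_coeff_principal_part:
  assumes hol: "f holomorphic_on - {0}" and "0 < r" "r < norm z"
  shows "(\<lambda>k. laurent_coeff f (- int (Suc k)) / z ^ Suc k)
           sums (contour_integral (circlepath 0 r) (\<lambda>w. f w / (z - w)) / (2 * pi * \<i>))"
proof -
  have "z \<noteq> 0"
    using assms by auto
  have cont: "continuous_on (sphere 0 r) f"
    using \<open>r > 0\<close> by (intro holomorphic_on_imp_continuous_on holomorphic_on_subset[OF hol]) auto
  have "(\<lambda>k. contour_integral (circlepath 0 r) (\<lambda>w. f w / z * (w / z) ^ k))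
          sums contour_integral (circlepath 0 r) (\<lambda>w. f w / z / (1 - w / z))"
    by (rule sums_contour_integral_geometric[where \<theta> = "r / norm z"])
       (use assms cont in
         \<open>auto intro!: continuous_intros simp: norm_divide divide_right_mono divide_less_eq\<close>)
  moreover have "contour_integral (circlepath 0 r) (\<lambda>w. f w / z * (w / z) ^ k)
                   = 2 * pi * \<i> * (laurent_coeff f (- int (Suc k)) / z ^ Suc k)" for k
  proof (rule contour_integral_unique)
    have "((\<lambda>w. f w * w powi (- (- int (Suc k)) - 1) / z ^ Suc k) has_contour_integral
            2 * pi * \<i> * (laurent_coeff f (- int (Suc k)) / z ^ Suc k)) (circlepath 0 r)"
      using has_contour_integral_div[OF has_contour_integral_laurent_coeff[OF hol \<open>r > 0\<close>]]
      by (simp only: times_divide_eq_right)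
    then show "((\<lambda>w. f w / z * (w / z) ^ k) has_contour_integral
                 2 * pi * \<i> * (laurent_coeff f (- int (Suc k)) / z ^ Suc k)) (circlepath 0 r)"
      by (rule has_contour_integral_eq) (auto simp: power_divide field_simps)
  qed
  moreover have "contour_integral (circlepath 0 r) (\<lambda>w. f w / z / (1 - w / z))
                   = contour_integral (circlepath 0 r) (\<lambda>w. f w / (z - w))"
    by (rule contour_integral_eq) (use \<open>z \<noteq> 0\<close> in \<open>auto simp: field_simps\<close>)
  ultimately have "(\<lambda>k. 2 * pi * \<i> * (laurent_coeff f (- int (Suc k)) / z ^ Suc k))
                    sums contour_integral (circlepath 0 r) (\<lambda>w. f w / (z - w))"
    by simp
  then show ?thesis
    by (rule sums_mult_D) simp
qed

lemma cauchy_integral_formula_annulus: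
  assumes hol: "f holomorphic_on - {0}" and "0 < r" "r < norm z" "norm z < R"
  shows "contour_integral (circlepath 0 R) (\<lambda>w. f w / (w - z))
           + contour_integral (circlepath 0 r) (\<lambda>w. f w / (z - w)) = 2 * pi * \<i> * f z"
proof -
  define h where "h = (\<lambda>w. f w / (w - z))"
  have "z \<noteq> 0" "R > 0"
    using assms by auto
  have hol_h: "h holomorphic_on UNIV - {0, z}"
    unfolding h_def using hol by (auto intro!: holomorphic_intros elim!: holomorphic_on_subset)
  \<comment> \<open>The outer circle encloses both poles 0 and z of h, the inner one only 0.\<close>
  have "contour_integral (circlepath 0 R) h
          = 2 * pi * \<i> * (\<Sum>p\<in>{0, z}. winding_number (circlepath 0 R) p * residue h p)"
    by (rule Residue_theorem[OF _ _ _ hol_h]) (use assms in auto)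
  also have "\<dots> = 2 * pi * \<i> * (residue h 0 + residue h z)"
    using assms \<open>z \<noteq> 0\<close> by (simp add: winding_number_circlepath)
  also have "residue h z = f z"
    unfolding h_def by (rule residue_simple[of "- {0}"]) (use hol \<open>z \<noteq> 0\<close> in auto)
  finally have outer: "contour_integral (circlepath 0 R) h = 2 * pi * \<i> * (residue h 0 + f z)" .
  have "(h has_contour_integral 2 * pi * \<i> * residue h 0) (circlepath 0 r)"
    by (rule base_residue[of "ball 0 (norm z)"])
       (use assms \<open>z \<noteq> 0\<close> in \<open>auto intro: holomorphic_on_subset[OF hol_h]\<close>)
  then have inner: "contour_integral (circlepath 0 r) (\<lambda>w. f w / (z - w)) = - 2 * pi * \<i> * residue h 0"
    using contour_integral_neg[of "circlepath 0 r" h]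
    by (simp add: contour_integral_unique h_def minus_divide_right)
  show ?thesis
    using outer inner by (simp add: h_def algebra_simps)
qed

definition laurent_sum :: "(int \<Rightarrow> complex) \<Rightarrow> complex \<Rightarrow> complex" where
  "laurent_sum b z = (\<Sum>k. b (int k) * z ^ k) + (\<Sum>k. b (- int (Suc k)) / z ^ Suc k)"

lemma laurent_expansion:
  assumes hol: "f holomorphic_on - {0}" and "z \<noteq> 0"
  shows "f z = laurent_sum (laurent_coeff f) z"
proof -
  have "norm z / 2 > 0" "norm z / 2 < norm z" "norm z < 2 * norm z"
    using \<open>z \<noteq> 0\<close> by auto
  note regular = sums_laurent_coeff_regular_part[OF hol \<open>norm z < 2 * norm z\<close>]
   and principal = sums_laurent_coeff_principal_part[OF hol \<open>norm z / 2 > 0\<close> \<open>norm z / 2 < norm z\<close>]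
  show ?thesis
    using cauchy_integral_formula_annulus[OF hol \<open>norm z / 2 > 0\<close> \<open>norm z / 2 < norm z\<close>
                                               \<open>norm z < 2 * norm z\<close>]
    unfolding laurent_sum_def sums_unique[OF regular, symmetric] sums_unique[OF principal, symmetric]
    by (simp add: field_simps)
qed

section \<open>Laurent series with rapidly decreasing coefficients\<close>

definition rapid_decay :: "(int \<Rightarrow> complex) \<Rightarrow> bool" where
  "rapid_decay b \<longleftrightarrow> (\<forall>\<rho>>0. \<exists>K. \<forall>n. norm (b n) \<le> K / \<rho> ^ nat \<bar>n\<bar>)"

lemma rapid_decay_laurent_coeff:
  assumes hol: "f holomorphic_on - {0}"
  shows "rapid_decay (laurent_coeff f)"
  unfolding rapid_decay_def
proof (intro allI impI)
  fix \<rho> :: real assume "\<rho> > 0"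
  have sphere_bound: "\<exists>M. \<forall>w. norm w = s \<longrightarrow> norm (f w) \<le> M" if "s > 0" for s
  proof -
    have "continuous_on (sphere 0 s) f"
      using that by (intro holomorphic_on_imp_continuous_on holomorphic_on_subset[OF hol]) auto
    then have "bounded (f ` sphere 0 s)"
      by (intro compact_imp_bounded compact_continuous_image) auto
    then show ?thesis
      unfolding bounded_iff by fastforce
  qed
  obtain M1 where M1: "\<And>w. norm w = \<rho> \<Longrightarrow> norm (f w) \<le> M1"
    using sphere_bound[OF \<open>\<rho> > 0\<close>] by blast
  obtain M2 where M2: "\<And>w. norm w = 1 / \<rho> \<Longrightarrow> norm (f w) \<le> M2"
    using sphere_bound[of "1 / \<rho>"] \<open>\<rho> > 0\<close> by auto
  have "norm (laurent_coeff f n) \<le> max M1 M2 / \<rho> ^ nat \<bar>n\<bar>" for n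
  proof (cases n rule: int_cases2)
    case (nonneg m)
    then have "norm (laurent_coeff f n) \<le> M1 / \<rho> ^ m"
      using laurent_coeff_bound[OF hol \<open>\<rho> > 0\<close> M1, of n]
      by (simp add: power_int_minus divide_inverse)
    then show ?thesis
      using nonneg \<open>\<rho> > 0\<close> by (simp add: divide_right_mono order_trans)
  next
    case (nonpos m)
    have "1 / \<rho> > 0"
      using \<open>\<rho> > 0\<close> by simp
    then have "norm (laurent_coeff f n) \<le> M2 * (1 / \<rho>) powi (- n)"
      by (rule laurent_coeff_bound[OF hol _ M2])
    also have "M2 * (1 / \<rho>) powi (- n) = M2 / \<rho> ^ m"
      using nonpos by (simp add: power_divide)
    finally have "norm (laurent_coeff f n) \<le> M2 / \<rho> ^ m" .
    then show ?thesis
      using nonpos \<open>\<rho> > 0\<close> by (simp add: divide_right_mono order_trans)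
  qed
  then show "\<exists>K. \<forall>n. norm (laurent_coeff f n) \<le> K / \<rho> ^ nat \<bar>n\<bar>"
    by blast
qed

lemma rapid_decay_mult_polynomially_bounded:
  assumes "rapid_decay b" and e: "\<And>n. norm (e n) \<le> M * \<bar>real_of_int n\<bar> powr L"
  shows "rapid_decay (\<lambda>n. e n * b n)"
  unfolding rapid_decay_def
proof (intro allI impI)
  fix \<rho> :: real assume "\<rho> > 0"
  have "2 * \<rho> > 0"
    using \<open>\<rho> > 0\<close> by simp
  then obtain K where K: "\<And>n. norm (b n) \<le> K / (2 * \<rho>) ^ nat \<bar>n\<bar>"
    using \<open>rapid_decay b\<close> unfolding rapid_decay_def by blast
  have "(\<lambda>m::nat. real m powr L / 2 ^ m) \<longlonglongrightarrow> 0"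
    by real_asymp
  then have "Bseq (\<lambda>m::nat. real m powr L / 2 ^ m)"
    by (rule convergent_imp_Bseq[OF convergentI])
  then obtain B where B: "\<And>m::nat. real m powr L / 2 ^ m \<le> B"
    unfolding Bseq_def by (metis abs_le_D1 real_norm_def)
  have "K \<ge> 0" "M \<ge> 0"
    using order_trans[OF norm_ge_zero K[of 0]] order_trans[OF norm_ge_zero e[of 1]] by simp_all
  have "norm (e n * b n) \<le> M * K * B / \<rho> ^ nat \<bar>n\<bar>" for n
  proof -
    have "norm (e n * b n) \<le> (M * real (nat \<bar>n\<bar>) powr L) * (K / (2 * \<rho>) ^ nat \<bar>n\<bar>)"
      unfolding norm_mult using e[of n] K[of n] order_trans[OF norm_ge_zero e[of n]]
      by (intro mult_mono) auto
    also have "\<dots> = M * K * (real (nat \<bar>n\<bar>) powr L / 2 ^ nat \<bar>n\<bar>) / \<rho> ^ nat \<bar>n\<bar>"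
      by (simp add: power_mult_distrib field_simps)
    also have "\<dots> \<le> M * K * B / \<rho> ^ nat \<bar>n\<bar>"
      using B[of "nat \<bar>n\<bar>"] \<open>\<rho> > 0\<close> \<open>K \<ge> 0\<close> \<open>M \<ge> 0\<close>
      by (intro divide_right_mono mult_left_mono) auto
    finally show ?thesis .
  qed
  then show "\<exists>K. \<forall>n. norm (e n * b n) \<le> K / \<rho> ^ nat \<bar>n\<bar>"
    by blast
qed

lemma summable_power_series_rapid_decay:
  fixes d :: "nat \<Rightarrow> complex"
  assumes "\<And>\<rho>. \<rho> > 0 \<Longrightarrow> \<exists>K. \<forall>n. norm (d n) \<le> K / \<rho> ^ n"
  shows "summable (\<lambda>n. d n * y ^ n)"
proof -
  define \<rho> where "\<rho> = 2 * norm y + 1"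
  have "\<rho> > 0"
    by (simp add: \<rho>_def add_nonneg_pos)
  then obtain K where K: "\<And>n. norm (d n) \<le> K / \<rho> ^ n"
    using assms by blast
  show ?thesis
  proof (rule summable_comparison_test)
    show "summable (\<lambda>n. \<bar>K\<bar> * (1 / 2) ^ n)"
      by (intro summable_mult summable_geometric) simp
    have "norm y / \<rho> \<le> 1 / 2"
      using \<open>\<rho> > 0\<close> by (simp add: \<rho>_def divide_le_eq)
    then have "norm (d n * y ^ n) \<le> \<bar>K\<bar> * (1 / 2) ^ n" for n
    proof -
      have "norm (d n * y ^ n) \<le> \<bar>K\<bar> / \<rho> ^ n * norm y ^ n"
        unfolding norm_mult norm_power
        using order_trans[OF K[of n] divide_right_mono[OF abs_ge_self]] \<open>\<rho> > 0\<close>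
        by (intro mult_right_mono) auto
      also have "\<dots> = \<bar>K\<bar> * (norm y / \<rho>) ^ n"
        by (simp add: power_divide)
      also have "\<dots> \<le> \<bar>K\<bar> * (1 / 2) ^ n"
        using \<open>norm y / \<rho> \<le> 1 / 2\<close> \<open>\<rho> > 0\<close> by (intro mult_left_mono power_mono) auto
      finally show ?thesis .
    qed
    then show "\<exists>N. \<forall>n\<ge>N. norm (d n * y ^ n) \<le> \<bar>K\<bar> * (1 / 2) ^ n"
      by blast
  qed
qed

lemma
  assumes "rapid_decay b"
  shows rapid_decay_summable_nonneg: "summable (\<lambda>k. b (int k) * y ^ k)"
    and rapid_decay_summable_nonpos: "summable (\<lambda>k. b (- int k) * y ^ k)"
proof -
  have decay: "\<exists>K. \<forall>k. norm (b (int k)) \<le> K / \<rho> ^ k \<and> norm (b (- int k)) \<le> K / \<rho> ^ k"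
    if "\<rho> > 0" for \<rho>
  proof -
    obtain K where "\<And>n. norm (b n) \<le> K / \<rho> ^ nat \<bar>n\<bar>"
      using assms \<open>\<rho> > 0\<close> unfolding rapid_decay_def by blast
    from this[of "int k" for k] this[of "- int k" for k] show ?thesis
      by auto
  qed
  show "summable (\<lambda>k. b (int k) * y ^ k)"
    by (rule summable_power_series_rapid_decay) (use decay in blast)
  show "summable (\<lambda>k. b (- int k) * y ^ k)"
    by (rule summable_power_series_rapid_decay) (use decay in blast)
qed

lemma holomorphic_on_suminf_power_series:
  assumes "\<And>y. summable (\<lambda>n. d n * y ^ n)"
  shows "(\<lambda>y. \<Sum>n. d n * y ^ n) holomorphic_on S"
  unfolding holomorphic_on_def field_differentiable_def
  using termdiffs_strong_converges_everywhere[OF assms] has_field_derivative_at_within by blast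

lemma laurent_sum_eq_power_series:
  assumes "rapid_decay b"
  shows "laurent_sum b z = (\<Sum>k. b (int k) * z ^ k) + (\<Sum>k. b (- int k) * (1 / z) ^ k) - b 0"
  using suminf_split_head[OF rapid_decay_summable_nonpos[OF assms, of "1 / z"]]
  by (simp add: laurent_sum_def power_one_over)

lemma holomorphic_laurent_sum:
  assumes "rapid_decay b"
  shows "laurent_sum b holomorphic_on - {0}"
proof -
  have "(\<lambda>y. \<Sum>k. b (int k) * y ^ k) holomorphic_on UNIV"
    by (rule holomorphic_on_suminf_power_series) (rule rapid_decay_summable_nonneg[OF assms])
  moreover have "(\<lambda>y. \<Sum>k. b (- int k) * y ^ k) holomorphic_on UNIV"
    by (rule holomorphic_on_suminf_power_series) (rule rapid_decay_summable_nonpos[OF assms])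
  then have "((\<lambda>y. \<Sum>k. b (- int k) * y ^ k) \<circ> (\<lambda>z. 1 / z)) holomorphic_on - {0}"
    by (intro holomorphic_on_compose_gen[where t = UNIV]) (auto intro!: holomorphic_intros)
  ultimately show ?thesis
    unfolding laurent_sum_eq_power_series[OF assms, abs_def] o_def
    by (intro holomorphic_on_diff holomorphic_on_add holomorphic_on_const)
       (auto elim: holomorphic_on_subset)
qed

lemma laurent_sum_diff:
  assumes "rapid_decay b" "rapid_decay b'"
  shows "laurent_sum b z - laurent_sum b' z = laurent_sum (\<lambda>n. b n - b' n) z"
proof -
  have principal: "summable (\<lambda>k. c (- int (Suc k)) / z ^ Suc k)" if "rapid_decay c" for c
    using summable_Suc_iff[THEN iffD2, OF rapid_decay_summable_nonpos[OF that, of "1 / z"]]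
    by (simp add: power_one_over)
  have "laurent_sum (\<lambda>n. b n - b' n) z
          = ((\<Sum>k. b (int k) * z ^ k) - (\<Sum>k. b' (int k) * z ^ k))
            + ((\<Sum>k. b (- int (Suc k)) / z ^ Suc k) - (\<Sum>k. b' (- int (Suc k)) / z ^ Suc k))"
    unfolding laurent_sum_def left_diff_distrib diff_divide_distrib
    by (simp only: suminf_diff[OF principal[OF assms(1)] principal[OF assms(2)]]
                   suminf_diff[OF rapid_decay_summable_nonneg[OF assms(1), of z]
                                  rapid_decay_summable_nonneg[OF assms(2), of z]])
  then show ?thesis
    by (simp add: laurent_sum_def)
qed

lemma laurent_sum_compose_scale: "laurent_sum b (q * z) = laurent_sum (\<lambda>n. q powi n * b n) z"
  unfolding laurent_sum_def
  by (simp add: power_mult_distrib power_int_minus divide_inverse mult_ac del: of_nat_Suc)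

section \<open>The q-difference equation and the first cohomology\<close>

lemma small_divisor_bound:
  fixes q :: complex
  assumes "C > 0"
    and dioph: "\<And>n::int. n \<noteq> 0 \<Longrightarrow> norm (q powi n - 1) \<ge> C * \<bar>real_of_int n\<bar> powr (- L)"
  shows "norm (1 / (q powi n - 1)) \<le> 1 / C * \<bar>real_of_int n\<bar> powr L"
    and "q powi n = 1 \<longleftrightarrow> n = 0"
proof -
  have lower: "0 < C * \<bar>real_of_int n\<bar> powr (- L)"
              "C * \<bar>real_of_int n\<bar> powr (- L) \<le> norm (q powi n - 1)" if "n \<noteq> 0"
    using \<open>C > 0\<close> dioph[OF that] that by simp_all
  then show "q powi n = 1 \<longleftrightarrow> n = 0"
    by force
  show "norm (1 / (q powi n - 1)) \<le> 1 / C * \<bar>real_of_int n\<bar> powr L"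
  proof (cases "n = 0")
    case False
    have "0 < norm (q powi n - 1)"
      using lower[OF False] by linarith
    then have "1 / norm (q powi n - 1) \<le> 1 / (C * \<bar>real_of_int n\<bar> powr (- L))"
      using lower[OF False] by (intro divide_left_mono) simp_all
    then show ?thesis
      by (simp add: norm_divide powr_minus divide_inverse norm_inverse)
  qed simp
qed

lemma q_difference_equation_solvable:
  assumes "norm q = 1" and "C > 0"
    and dioph: "\<And>n::int. n \<noteq> 0 \<Longrightarrow> norm (q powi n - 1) \<ge> C * \<bar>real_of_int n\<bar> powr (- L)"
    and hol: "f holomorphic_on - {0}" and "laurent_coeff f 0 = 0"
  obtains a where "a holomorphic_on - {0}" "\<And>z. z \<noteq> 0 \<Longrightarrow> a (q * z) - a z = f z"
proof -
  note small_divisor = small_divisor_bound[OF \<open>C > 0\<close> dioph]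
  \<comment> \<open>For n = 0 the division by q powi 0 - 1 = 0 yields b 0 = 0, which is harmless since
    laurent_coeff f 0 = 0.\<close>
  define b where "b n = laurent_coeff f n / (q powi n - 1)" for n
  have decay: "rapid_decay b"
    using rapid_decay_mult_polynomially_bounded[OF rapid_decay_laurent_coeff[OF hol] small_divisor(1)]
    by (simp add: b_def[abs_def])
  have decay_rotated: "rapid_decay (\<lambda>n. q powi n * b n)"
    using decay \<open>norm q = 1\<close> by (simp add: rapid_decay_def norm_mult norm_power_int)
  have coeff: "q powi n * b n - b n = laurent_coeff f n" for n
  proof (cases "n = 0")
    case False
    have "q powi n - 1 \<noteq> 0"
      using small_divisor(2)[of n] False by simp
    have "q powi n * b n - b n = (q powi n - 1) * (laurent_coeff f n / (q powi n - 1))"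
      by (simp add: b_def left_diff_distrib diff_divide_distrib)
    also have "\<dots> = laurent_coeff f n"
      using \<open>q powi n - 1 \<noteq> 0\<close> by simp
    finally show ?thesis .
  qed (simp add: b_def \<open>laurent_coeff f 0 = 0\<close>)
  show ?thesis
  proof (rule that)
    show "laurent_sum b holomorphic_on - {0}"
      by (rule holomorphic_laurent_sum[OF decay])
    fix z :: complex assume "z \<noteq> 0"
    have "laurent_sum b (q * z) - laurent_sum b z = laurent_sum (\<lambda>n. q powi n * b n - b n) z"
      unfolding laurent_sum_compose_scale by (rule laurent_sum_diff[OF decay_rotated decay])
    also have "\<dots> = f z"
      unfolding coeff by (rule laurent_expansion[OF hol \<open>z \<noteq> 0\<close>, symmetric])
    finally show "laurent_sum b (q * z) - laurent_sum b z = f z" .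
  qed
qed

lemma Z1_holomorphic:
  assumes "c \<in> Z1 q"
  shows "c n holomorphic_on - {0}" and "c n 0 = 0"
  using assms by (auto simp: Z1_def holCstar_def)

lemma Z1_cocycle:
  assumes "c \<in> Z1 q"
  shows "c (m + n) z = c m z + c n (q powi m * z)"
  using assms unfolding Z1_def qact_def by (auto dest: fun_cong)

lemma Z1_eqI:
  assumes c: "c \<in> Z1 q" and d: "d \<in> Z1 q" and "c 1 = d 1"
  shows "c = d"
proof (intro ext)
  have zero: "e 0 w = 0" if "e \<in> Z1 q" for e w
    using Z1_cocycle[OF that, of 0 0 w] by simp
  show "c n z = d n z" for n z
  proof (induction n arbitrary: z rule: int_induct[where k = 0])
    case base
    show ?case
      using zero[OF c] zero[OF d] by simp
  next
    case (step1 i)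
    show ?case
      using Z1_cocycle[OF c, of i 1 z] Z1_cocycle[OF d, of i 1 z] step1 \<open>c 1 = d 1\<close> by simp
  next
    case (step2 i)
    show ?case
      using Z1_cocycle[OF c, of "i - 1" 1 z] Z1_cocycle[OF d, of "i - 1" 1 z] step2 \<open>c 1 = d 1\<close> by simp
  qed
qed

lemma coboundary_in_Z1:
  assumes "q \<noteq> 0" and a: "a \<in> holCstar"
  shows "(\<lambda>n z. qact q n a z - a z) \<in> Z1 q"
proof -
  have hol: "a holomorphic_on - {0}" and "a 0 = 0"
    using a by (auto simp: holCstar_def)
  have "(\<lambda>z. a (q powi n * z) - a z) holomorphic_on - {0}" for n
    using \<open>q \<noteq> 0\<close> by (intro holomorphic_on_diff holomorphic_on_compose_scale hol) simp
  then show ?thesis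
    using \<open>q \<noteq> 0\<close> \<open>a 0 = 0\<close>
    by (auto simp: Z1_def holCstar_def qact_def power_int_add mult_ac)
qed

lemma constant_cocycle_in_Z1:
  assumes "q \<noteq> 0"
  shows "(\<lambda>n z. if z = 0 then 0 else of_int n * k) \<in> Z1 q"
proof -
  have "(\<lambda>z. if z = 0 then 0 else of_int n * k) holomorphic_on - {0}" for n
    by (rule holomorphic_transform[of "\<lambda>_. of_int n * k"]) auto
  then show ?thesis
    using \<open>q \<noteq> 0\<close> by (auto simp: Z1_def holCstar_def qact_def algebra_simps)
qed

lemma laurent_coeff_Z1_surj:
  assumes "q \<noteq> 0"
  shows "(\<lambda>c. laurent_coeff (c 1) 0) ` Z1 q = UNIV"
proof -
  have "laurent_coeff (\<lambda>z. if z = 0 then 0 else k) 0 = k" for k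
    by (subst laurent_coeff_cong[where g = "\<lambda>_. k"]) (simp_all add: laurent_coeff_const)
  then have "k \<in> (\<lambda>c. laurent_coeff (c 1) 0) ` Z1 q" for k
    by (intro image_eqI[OF _ constant_cocycle_in_Z1[OF assms, of k]]) simp
  then show ?thesis
    by blast
qed

lemma B1_imp_laurent_coeff_zero:
  assumes "q \<noteq> 0" and "c \<in> B1 q"
  shows "c \<in> Z1 q" and "laurent_coeff (c 1) 0 = 0"
proof -
  obtain a where a: "a \<in> holCstar" and c: "c = (\<lambda>n z. qact q n a z - a z)"
    using assms(2) unfolding B1_def by blast
  have hol: "a holomorphic_on - {0}"
    using a by (simp add: holCstar_def)
  show "c \<in> Z1 q"
    unfolding c by (rule coboundary_in_Z1[OF \<open>q \<noteq> 0\<close> a])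
  have "laurent_coeff (c 1) 0 = laurent_coeff (\<lambda>z. a (q * z)) 0 - laurent_coeff a 0"
    unfolding c qact_def using \<open>q \<noteq> 0\<close>
    by (simp add: laurent_coeff_diff holomorphic_on_compose_scale hol)
  then show "laurent_coeff (c 1) 0 = 0"
    by (simp add: laurent_coeff_compose_scale[OF hol \<open>q \<noteq> 0\<close>])
qed

lemma laurent_coeff_zero_imp_B1:
  assumes "norm q = 1" and "C > 0"
    and "\<And>n::int. n \<noteq> 0 \<Longrightarrow> norm (q powi n - 1) \<ge> C * \<bar>real_of_int n\<bar> powr (- L)"
    and c: "c \<in> Z1 q" and "laurent_coeff (c 1) 0 = 0"
  shows "c \<in> B1 q"
proof -
  have "q \<noteq> 0"
    using \<open>norm q = 1\<close> by auto
  obtain a where hol: "a holomorphic_on - {0}" and eq: "\<And>z. z \<noteq> 0 \<Longrightarrow> a (q * z) - a z = c 1 z"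
    using q_difference_equation_solvable[OF assms(1-3) Z1_holomorphic(1)[OF c] assms(5)] by blast
  define a' where "a' z = (if z = 0 then 0 else a z)" for z
  have "a' holomorphic_on - {0}"
    by (rule holomorphic_transform[OF hol]) (simp add: a'_def)
  then have a': "a' \<in> holCstar"
    by (simp add: holCstar_def a'_def)
  have "c 1 = (\<lambda>z. qact q 1 a' z - a' z)"
    using eq \<open>q \<noteq> 0\<close> Z1_holomorphic(2)[OF c] by (auto simp: qact_def a'_def)
  then have "c = (\<lambda>n z. qact q n a' z - a' z)"
    by (intro Z1_eqI[OF c coboundary_in_Z1[OF \<open>q \<noteq> 0\<close> a']]) simp
  then show ?thesis
    unfolding B1_def using a' by blast
qed

theorem lemma3:
  fixes q :: complex
  assumes "q \<noteq> 0" and "norm q = 1"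
    and "\<forall>n::nat. n > 0 \<longrightarrow> q ^ n \<noteq> 1"
    and "\<exists>C L :: real. C > 0 \<and> L > 0 \<and>
           (\<forall>n::int. n \<noteq> 0 \<longrightarrow> norm (q powi n - 1) \<ge> C * \<bar>real_of_int n\<bar> powr (- L))"
  shows "H1_iso_C q"
proof -
  \<comment> \<open>The third hypothesis (q is not a root of unity) follows from the Diophantine bound.\<close>
  obtain C L :: real where "C > 0"
    and dioph: "\<And>n::int. n \<noteq> 0 \<Longrightarrow> norm (q powi n - 1) \<ge> C * \<bar>real_of_int n\<bar> powr (- L)"
    using assms(4) by blast
  have kernel: "{c \<in> Z1 q. laurent_coeff (c 1) 0 = 0} = B1 q"
    using laurent_coeff_zero_imp_B1[OF assms(2) \<open>C > 0\<close> dioph] B1_imp_laurent_coeff_zero[OF assms(1)]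
    by blast
  show ?thesis
    unfolding H1_iso_C_def
  proof (intro exI[of _ "\<lambda>c. laurent_coeff (c 1) 0"] conjI ballI allI
               laurent_coeff_Z1_surj[OF assms(1)] kernel)
    show "laurent_coeff (\<lambda>z. c 1 z + d 1 z) 0 = laurent_coeff (c 1) 0 + laurent_coeff (d 1) 0"
      if "c \<in> Z1 q" "d \<in> Z1 q" for c d
      using that by (intro laurent_coeff_add Z1_holomorphic(1))
    show "laurent_coeff (\<lambda>z. k * c 1 z) 0 = k * laurent_coeff (c 1) 0" if "c \<in> Z1 q" for c k
      using that by (intro laurent_coeff_cmult Z1_holomorphic(1))
  qed
qed

end
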